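(* For positive integers $n$ and $t$, the complete multipartite graph $K_{n\times t}$ (with $n$ parts each of size $t$) is integrable.
   Context: For a graph $G$ with adjacency matrix $A(G)$ and smallest eigenvalue $\theta_{\min}(G)$, $G$ is integrable if there is an integral matrix $N$ with $A(G)-\lfloor\theta_{\min}(G)\rfloor I=N^TN$. For $n\geq 2$, $K_{n\times t}$ is strongly regular with parameters $(nt,(n-1)t,(n-2)t,(n-1)t)$ and smallest eigenvalue $-t$. *)

theory Defs
  imports "Jordan_Normal_Form.Char_Poly"
begin

text \<open>A finite simple graph on vertex set {0..<v}, given by a symmetric irreflexive
  edge relation E. Its adjacency matrix is a v x v integer matrix.\<close>

definition adjacency_matrix :: "nat \<Rightarrow> (nat \<Rightarrow> nat \<Rightarrow> bool) \<Rightarrow> int mat" where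
  "adjacency_matrix v E = mat v v (\<lambda>(i, j). if E i j then 1 else 0)"

definition theta_min :: "int mat \<Rightarrow> real" where
  "theta_min A = Min {k. eigenvalue (map_mat real_of_int A) k}"

definition integrable :: "nat \<Rightarrow> (nat \<Rightarrow> nat \<Rightarrow> bool) \<Rightarrow> bool" where
  "integrable v E \<longleftrightarrow>
     (\<exists>(N :: int mat) m. N \<in> carrier_mat m v \<and>
        adjacency_matrix v E - of_int \<lfloor>theta_min (adjacency_matrix v E)\<rfloor> \<cdot>\<^sub>m 1\<^sub>m v
          = transpose_mat N * N)"

text \<open>Complete multipartite graph K_{n x t}: vertices 0..<n*t, vertex i lies in part i div t,
  and two vertices are adjacent iff they lie in different parts.\<close>
definition Knt_vertices :: "nat \<Rightarrow> nat \<Rightarrow> nat" where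
  "Knt_vertices n t = n * t"

definition Knt_edge :: "nat \<Rightarrow> nat \<Rightarrow> nat \<Rightarrow> bool" where
  "Knt_edge t i j \<longleftrightarrow> i div t \<noteq> j div t"

end

theory Submission
  imports Defs
begin

(* Let A be the adjacency matrix of K_{n x t}, J the all-ones matrix and L the Laplacian of
   n disjoint copies of K_t. Then A + t I = J + L, and J + L = N^T N for the integral matrix N
   whose rows are the all-ones vector and the vectors e_x - e_y, one for each pair x < y in a
   common part. So A + t I is positive semidefinite and every eigenvalue of A is at least -t.
   For n >= 2 the difference of the indicator vectors of two parts lies in the kernel of N,
   hence -t is an eigenvalue and theta_min = -t. For n = 1 the graph is edgeless,
   theta_min = 0, and the empty 0 x t matrix does the job. *)

lemma sum_lessThan_mult_div:
  fixes f :: "nat \<Rightarrow> 'a::comm_semiring_1"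
  shows "(\<Sum>i<n * t. f (i div t)) = of_nat t * (\<Sum>p<n. f p)"
proof (cases "t = 0")
  case False
  have "(\<Sum>i<n * t. f (i div t)) = (\<Sum>p<n. \<Sum>i\<in>{p * t..<p * t + t}. f (i div t))"
    by (rule sum.nat_group[symmetric])
  also have "\<dots> = (\<Sum>p<n. of_nat t * f p)"
  proof (rule sum.cong)
    fix p
    have "i div t = p" if "i \<in> {p * t..<p * t + t}" for i
      using that by (simp add: div_nat_eqI mult.commute)
    then show "(\<Sum>i\<in>{p * t..<p * t + t}. f (i div t)) = of_nat t * f p" by simp
  qed simp
  finally show ?thesis by (simp add: sum_distrib_left)
qed simp

lemma card_div_eq:
  assumes "p < n"
  shows "card {i. i < n * t \<and> i div t = p} = t"
proof -
  have "card {i. i < n * t \<and> i div t = p} = (\<Sum>i<n * t. of_bool (i div t = p) :: nat)"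
    by (simp add: Int_def conj_commute)
  also have "\<dots> = t * (\<Sum>q<n. of_bool (q = p))"
    using sum_lessThan_mult_div[where f = "\<lambda>q. of_bool (q = p) :: nat" and n = n and t = t] by simp
  finally show ?thesis using assms by simp
qed

lemma sum_oriented_edge_products:
  fixes P :: "('a \<times> 'a) set"
  assumes "finite P" and "\<And>x y. (x, y) \<in> P \<Longrightarrow> x \<noteq> y"
  shows "(\<Sum>(x, y)\<in>P. (of_bool (i = x) - of_bool (i = y)) * (of_bool (j = x) - of_bool (j = y))
           :: 'b::comm_ring_1)
    = (if i = j then of_nat (card {(x, y) \<in> P. i = x \<or> i = y})
       else - of_nat (card (P \<inter> {(i, j), (j, i)})))"
proof (cases "i = j")
  case True
  have "(\<Sum>(x, y)\<in>P. (of_bool (i = x) - of_bool (i = y)) * (of_bool (i = x) - of_bool (i = y))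
           :: 'b)
      = (\<Sum>p\<in>P. of_bool (p \<in> {(x, y). i = x \<or> i = y}))"
    by (intro sum.cong) (auto simp: of_bool_def split: if_splits dest: assms(2))
  also have "\<dots> = of_nat (card {(x, y) \<in> P. i = x \<or> i = y})"
    using assms(1) by (simp add: Int_def) (rule arg_cong[where f = "\<lambda>A. of_nat (card A)"], auto)
  finally show ?thesis using True by simp
next
  case False
  have "(\<Sum>(x, y)\<in>P. (of_bool (i = x) - of_bool (i = y)) * (of_bool (j = x) - of_bool (j = y))
           :: 'b)
      = - (\<Sum>p\<in>P. of_bool (p \<in> {(i, j), (j, i)}))"
    unfolding sum_negf[symmetric] using False
    by (intro sum.cong) (auto simp: of_bool_def split: if_splits dest: assms(2))
  with False show ?thesis using assms(1) by (simp add: Int_def)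
qed

lemma smult_one_mat_mult_vec:
  assumes "v \<in> carrier_vec n"
  shows "(c \<cdot>\<^sub>m 1\<^sub>m n) *\<^sub>v v = c \<cdot>\<^sub>v (v :: 'a::comm_ring_1 vec)"
proof (rule eq_vecI)
  fix i assume "i < dim_vec (c \<cdot>\<^sub>v v)"
  then have i: "i < n" using assms by simp
  have "row (c \<cdot>\<^sub>m 1\<^sub>m n) i = c \<cdot>\<^sub>v unit_vec n i"
    using i by (intro eq_vecI) auto
  then show "((c \<cdot>\<^sub>m 1\<^sub>m n) *\<^sub>v v) $ i = (c \<cdot>\<^sub>v v) $ i"
    using i assms by simp
qed (use assms in simp)

lemma gram_mat_of_rows_index:
  assumes "set rs \<subseteq> carrier_vec n" and "i < n" and "j < n"
  shows "(transpose_mat (mat_of_rows n rs) * mat_of_rows n rs) $$ (i, j)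
    = (\<Sum>r\<leftarrow>rs. r $ i * r $ j)"
  using assms by (simp add: scalar_prod_def mat_of_rows_index sum_list_sum_nth atLeast0LessThan)

lemma eigenvalue_ge_of_shifted_gram:
  fixes M N :: "real mat"
  assumes N: "N \<in> carrier_mat m n" and M: "M \<in> carrier_mat n n"
    and gram: "M + c \<cdot>\<^sub>m 1\<^sub>m n = transpose_mat N * N" and "eigenvalue M k"
  shows "- c \<le> k"
proof -
  obtain v where v: "v \<in> carrier_vec n" "v \<noteq> 0\<^sub>v n" "M *\<^sub>v v = k \<cdot>\<^sub>v v"
    using assms(4) M unfolding eigenvalue_def eigenvector_def by auto
  have "transpose_mat N *\<^sub>v (N *\<^sub>v v) = (M + c \<cdot>\<^sub>m 1\<^sub>m n) *\<^sub>v v"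
    using N v by (simp add: gram)
  also have "\<dots> = (k + c) \<cdot>\<^sub>v v"
    using M v
    by (simp add: add_mult_distrib_mat_vec smult_one_mat_mult_vec add_smult_distrib_vec)
  finally have "(k + c) * (v \<bullet> v) = (N *\<^sub>v v) \<bullet> (N *\<^sub>v v)"
    using transpose_vec_mult_scalar[OF N v(1), of "N *\<^sub>v v"] N v by simp
  moreover have "0 \<le> (N *\<^sub>v v) \<bullet> (N *\<^sub>v v)"
    using conjugate_square_ge_0_vec[of "N *\<^sub>v v"] by simp
  moreover have "0 < v \<bullet> v"
    using conjugate_square_greater_0_vec[OF v(1)] v(2) by simp
  ultimately show ?thesis
    using zero_le_mult_iff[of "k + c" "v \<bullet> v"] by linarith
qed

lemma eigenvalue_of_shifted_gram_kernel:
  fixes M N :: "real mat"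
  assumes N: "N \<in> carrier_mat m n" and M: "M \<in> carrier_mat n n"
    and gram: "M + c \<cdot>\<^sub>m 1\<^sub>m n = transpose_mat N * N"
    and w: "w \<in> carrier_vec n" "w \<noteq> 0\<^sub>v n" and kernel: "N *\<^sub>v w = 0\<^sub>v m"
  shows "eigenvalue M (- c)"
proof -
  have "M *\<^sub>v w + c \<cdot>\<^sub>v w = (M + c \<cdot>\<^sub>m 1\<^sub>m n) *\<^sub>v w"
    using M w by (simp add: add_mult_distrib_mat_vec smult_one_mat_mult_vec)
  also have "\<dots> = transpose_mat N *\<^sub>v (N *\<^sub>v w)"
    using N w by (simp add: gram)
  also have "\<dots> = 0\<^sub>v n"
    using N by (intro eq_vecI) (auto simp: kernel)
  finally have sum0: "M *\<^sub>v w + c \<cdot>\<^sub>v w = 0\<^sub>v n" .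
  have "M *\<^sub>v w = - c \<cdot>\<^sub>v w"
  proof (rule eq_vecI)
    fix i assume "i < dim_vec (- c \<cdot>\<^sub>v w)"
    then have i: "i < n" using w by simp
    then have "(M *\<^sub>v w + c \<cdot>\<^sub>v w) $ i = 0" by (simp only: sum0 index_zero_vec)
    then show "(M *\<^sub>v w) $ i = (- c \<cdot>\<^sub>v w) $ i"
      using M w i by (simp add: eq_neg_iff_add_eq_0)
  qed (use M w in simp)
  then show ?thesis
    using M w unfolding eigenvalue_def eigenvector_def by auto
qed

lemma Min_eigenvalue_of_shifted_gram:
  fixes M N :: "real mat"
  assumes N: "N \<in> carrier_mat m n" and M: "M \<in> carrier_mat n n"
    and gram: "M + c \<cdot>\<^sub>m 1\<^sub>m n = transpose_mat N * N"
    and "w \<in> carrier_vec n" "w \<noteq> 0\<^sub>v n" "N *\<^sub>v w = 0\<^sub>v m"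
  shows "Min {k. eigenvalue M k} = - c"
proof (rule Min_eqI)
  have "finite {k. poly (char_poly M) k = 0}"
    using degree_monic_char_poly[OF M] by (intro poly_roots_finite) auto
  then show "finite {k. eigenvalue M k}"
    using eigenvalue_root_char_poly[OF M] by simp
  show "- c \<le> k" if "k \<in> {k. eigenvalue M k}" for k
    using eigenvalue_ge_of_shifted_gram[OF N M gram] that by simp
  show "- c \<in> {k. eigenvalue M k}"
    using eigenvalue_of_shifted_gram_kernel[OF assms] by simp
qed

lemma integrable_of_shifted_gram_kernel:
  fixes N :: "int mat" and w :: "int vec"
  assumes N: "N \<in> carrier_mat m V"
    and gram: "adjacency_matrix V E + c \<cdot>\<^sub>m 1\<^sub>m V = transpose_mat N * N"
    and w: "w \<in> carrier_vec V" "w \<noteq> 0\<^sub>v V" and kernel: "N *\<^sub>v w = 0\<^sub>v m"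
  shows "integrable V E"
proof -
  let ?A = "adjacency_matrix V E"
  have A: "?A \<in> carrier_mat V V"
    by (simp add: adjacency_matrix_def)
  have "map_mat real_of_int ?A + real_of_int c \<cdot>\<^sub>m 1\<^sub>m V
      = map_mat real_of_int (?A + c \<cdot>\<^sub>m 1\<^sub>m V)"
    using A by (intro eq_matI) auto
  also have "\<dots> = transpose_mat (map_mat real_of_int N) * map_mat real_of_int N"
    using N
    by (simp add: gram of_int_hom.mat_hom_mult[of "transpose_mat N" V m N V] map_mat_transpose)
  finally have real_gram: "map_mat real_of_int ?A + real_of_int c \<cdot>\<^sub>m 1\<^sub>m V
      = transpose_mat (map_mat real_of_int N) * map_mat real_of_int N" .
  have "map_mat real_of_int N *\<^sub>v map_vec real_of_int w = 0\<^sub>v m"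
    using N w by (simp add: of_int_hom.mult_mat_vec_hom[symmetric] kernel)
  then have "theta_min ?A = - real_of_int c"
    unfolding theta_min_def using N A w
    by (intro Min_eigenvalue_of_shifted_gram[OF _ _ real_gram, of m "map_vec real_of_int w"])
      auto
  then have "?A - of_int \<lfloor>theta_min ?A\<rfloor> \<cdot>\<^sub>m 1\<^sub>m V = ?A + c \<cdot>\<^sub>m 1\<^sub>m V"
    using A by (intro eq_matI) auto
  then show ?thesis
    unfolding integrable_def using N gram by auto
qed

definition same_part_pairs :: "nat \<Rightarrow> nat \<Rightarrow> (nat \<times> nat) list" where
  "same_part_pairs n t =
     filter (\<lambda>(x, y). x div t = y div t \<and> x < y) (List.product [0..<n * t] [0..<n * t])"

lemma set_same_part_pairs:
  "set (same_part_pairs n t) = {(x, y). x < n * t \<and> y < n * t \<and> x div t = y div t \<and> x < y}"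
  by (auto simp: same_part_pairs_def)

lemma distinct_same_part_pairs: "distinct (same_part_pairs n t)"
  by (simp add: same_part_pairs_def distinct_product)

lemma card_same_part_pairs_incident:
  assumes i: "i < n * t"
  shows "card {(x, y) \<in> set (same_part_pairs n t). i = x \<or> i = y} = t - 1"
proof -
  let ?Q = "{j. j < n * t \<and> j div t = i div t} - {i}"
  have "{(x, y) \<in> set (same_part_pairs n t). i = x \<or> i = y} = (\<lambda>j. (min i j, max i j)) ` ?Q"
  proof (intro equalityI subsetI)
    fix p assume "p \<in> {(x, y) \<in> set (same_part_pairs n t). i = x \<or> i = y}"
    then obtain x y where "p = (x, y)" "x < n * t" "y < n * t" "x div t = y div t" "x < y"
      and "i = x \<or> i = y"
      by (auto simp: set_same_part_pairs)
    then show "p \<in> (\<lambda>j. (min i j, max i j)) ` ?Q"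
      by (auto intro!: image_eqI[where x = "if i = x then y else x"])
  qed (use i in \<open>auto simp: set_same_part_pairs min_def max_def split: if_splits\<close>)
  moreover have "inj_on (\<lambda>j. (min i j, max i j)) ?Q"
    by (auto simp: inj_on_def min_def max_def split: if_splits)
  moreover have "card ?Q = t - 1"
    using card_div_eq[of "i div t" n t] i by (simp add: less_mult_imp_div_less)
  ultimately show ?thesis
    by (simp add: card_image)
qed

definition Knt_factor :: "nat \<Rightarrow> nat \<Rightarrow> 'a::comm_ring_1 mat" where
  "Knt_factor n t = mat_of_rows (n * t)
     (vec (n * t) (\<lambda>_. 1) #
      map (\<lambda>(x, y). unit_vec (n * t) x - unit_vec (n * t) y) (same_part_pairs n t))"

lemma Knt_factor_carrier:
  "Knt_factor n t \<in> carrier_mat (Suc (length (same_part_pairs n t))) (n * t)"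
  unfolding Knt_factor_def by (metis mat_of_rows_carrier(1) length_Cons length_map)

lemma Knt_factor_gram_index:
  assumes i: "i < n * t" and j: "j < n * t"
  shows "(transpose_mat (Knt_factor n t) * (Knt_factor n t :: 'a::comm_ring_1 mat)) $$ (i, j)
    = (if i = j then of_nat t else if i div t = j div t then 0 else 1)"
proof -
  let ?P = "set (same_part_pairs n t)"
  have "(transpose_mat (Knt_factor n t) * (Knt_factor n t :: 'a mat)) $$ (i, j)
      = 1 + (\<Sum>(x, y)\<leftarrow>same_part_pairs n t.
               (unit_vec (n * t) x - unit_vec (n * t) y) $ i
               * (unit_vec (n * t) x - unit_vec (n * t) y) $ j)"
    unfolding Knt_factor_def using i j
    by (subst gram_mat_of_rows_index) (auto simp: comp_def case_prod_unfold)
  also have "\<dots> = 1 + (\<Sum>(x, y)\<in>?P.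
               (of_bool (i = x) - of_bool (i = y)) * (of_bool (j = x) - of_bool (j = y)))"
    using i j distinct_same_part_pairs[of n t]
    by (auto simp: sum_list_distinct_conv_sum_set set_same_part_pairs intro!: sum.cong)
  also have "\<dots> = 1 + (if i = j then of_nat (card {(x, y) \<in> ?P. i = x \<or> i = y})
                        else - of_nat (card (?P \<inter> {(i, j), (j, i)})))"
    by (subst sum_oriented_edge_products[OF finite_set]) (auto simp: set_same_part_pairs)
  also have "\<dots> = (if i = j then of_nat t else if i div t = j div t then 0 else 1)"
  proof (cases "i = j")
    case True
    have "t > 0" using i by (cases t) auto
    then show ?thesis
      using True i by (simp add: card_same_part_pairs_incident)
  next
    case False
    then have "?P \<inter> {(i, j), (j, i)} = (if i div t = j div t then {(min i j, max i j)} else {})"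
      using i j by (auto simp: set_same_part_pairs min_def max_def)
    then show ?thesis
      using False by simp
  qed
  finally show ?thesis .
qed

lemma adjacency_Knt_shifted_eq_gram:
  "adjacency_matrix (n * t) (Knt_edge t) + int t \<cdot>\<^sub>m 1\<^sub>m (n * t)
     = transpose_mat (Knt_factor n t) * Knt_factor n t"
proof (rule eq_matI)
  fix i j assume "i < dim_row (transpose_mat (Knt_factor n t) * (Knt_factor n t :: int mat))"
    and "j < dim_col (transpose_mat (Knt_factor n t) * (Knt_factor n t :: int mat))"
  then have "i < n * t" "j < n * t"
    using carrier_matD[OF Knt_factor_carrier[of n t, where 'a = int]] by auto
  then show "(adjacency_matrix (n * t) (Knt_edge t) + int t \<cdot>\<^sub>m 1\<^sub>m (n * t)) $$ (i, j)
      = (transpose_mat (Knt_factor n t) * Knt_factor n t) $$ (i, j)"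
    by (simp only: Knt_factor_gram_index) (simp add: adjacency_matrix_def Knt_edge_def)
qed (use Knt_factor_carrier[of n t, where 'a = int] in \<open>auto simp: adjacency_matrix_def\<close>)

lemma Knt_factor_kernel:
  assumes "2 \<le> n"
  shows "Knt_factor n t *\<^sub>v vec (n * t) (\<lambda>i. of_bool (i div t = 0) - of_bool (i div t = 1))
    = (0\<^sub>v (Suc (length (same_part_pairs n t))) :: 'a::comm_ring_1 vec)"
    (is "_ *\<^sub>v ?w = _")
proof (rule eq_vecI)
  fix k assume "k < dim_vec (0\<^sub>v (Suc (length (same_part_pairs n t))) :: 'a vec)"
  then have k: "k < Suc (length (same_part_pairs n t))" by simp
  show "(Knt_factor n t *\<^sub>v ?w) $ k = 0\<^sub>v (Suc (length (same_part_pairs n t))) $ k"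
  proof (cases k)
    case 0
    have "(\<Sum>i<n * t. of_bool (i div t = 0) - of_bool (i div t = 1))
        = (of_nat t * (1 - 1) :: 'a)"
      using assms by (subst sum_lessThan_mult_div) (simp add: sum_subtractf)
    then show ?thesis
      using 0 by (simp add: Knt_factor_def mat_of_rows_def scalar_prod_def atLeast0LessThan)
  next
    case (Suc l)
    obtain x y where xy: "same_part_pairs n t ! l = (x, y)" by fastforce
    then have "(x, y) \<in> set (same_part_pairs n t)"
      using k Suc by (metis Suc_less_eq nth_mem)
    then have "x < n * t" "y < n * t" "x div t = y div t"
      by (auto simp: set_same_part_pairs)
    then show ?thesis
      using k Suc xy by (simp add: Knt_factor_def minus_scalar_prod_distrib[of _ "n * t"])
  qed
qed (simp add: Knt_factor_def)

theorem mainTheorem4: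
  fixes n t :: nat
  assumes "n > 0" and "t > 0"
  shows "integrable (Knt_vertices n t) (Knt_edge t)"
proof (cases "n = 1")
  case True
  have gram: "adjacency_matrix (n * t) (Knt_edge t) + 0 \<cdot>\<^sub>m 1\<^sub>m (n * t)
      = transpose_mat (0\<^sub>m 0 (n * t)) * 0\<^sub>m 0 (n * t)"
    using True by (intro eq_matI) (auto simp: adjacency_matrix_def Knt_edge_def)
  show ?thesis
    unfolding Knt_vertices_def
    by (rule integrable_of_shifted_gram_kernel[OF _ gram, where w = "unit_vec (n * t) 0"])
      (use assms in auto)
next
  case False
  let ?w = "vec (n * t) (\<lambda>i. of_bool (i div t = 0) - of_bool (i div t = 1)) :: int vec"
  have "?w $ 0 = 1" "0 < n * t"
    using assms by simp_all
  then have "?w \<noteq> 0\<^sub>v (n * t)"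
    by (metis index_zero_vec(1) zero_neq_one)
  then show ?thesis
    unfolding Knt_vertices_def using False assms
    by (intro integrable_of_shifted_gram_kernel
        [OF Knt_factor_carrier adjacency_Knt_shifted_eq_gram _ _ Knt_factor_kernel]) auto
qed

end
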